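(* Let $X$ be a topological space with $|X|\ge 2$, $G$ an infinite Abelian group, and $f\colon G\to X$ a Korovin mapping. Then the Korovin orbit $G_f$ is Hausdorff if and only if the space $X$ contains two disjoint nonempty open sets. (In particular, every Korovin orbit in $X^G$ is Hausdorff if and only if some Korovin orbit in $X^G$ is Hausdorff.)
   Context: $X^G$ carries the product topology. For $f\in X^G$ and $g\in G$ let $gf\in X^G$ be given by $(gf)(x)=f(xg)$, and let $G_f=\{gf:g\in G\}\subseteq X^G$ with the subspace topology. The map $f\colon G\to X$ is a Korovin mapping if $\pi_M(G_f)=X^M$ for every countable $M\subseteq G$, where $\pi_M\colon X^G\to X^M$ is the projection; in that case $G_f$ is called a Korovin orbit. *)

theory Defs
  imports "HOL-Analysis.Analysis" "HOL-Library.Countable_Set"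
begin

text \<open>The group G is modelled as an abelian group type (written additively), so
  (g f)(x) = f(x g) becomes f (x + g).\<close>

definition shift :: "'g::ab_group_add \<Rightarrow> ('g \<Rightarrow> 'a) \<Rightarrow> ('g \<Rightarrow> 'a)" where
  "shift g f = (\<lambda>x. f (x + g))"

definition orbit :: "('g::ab_group_add \<Rightarrow> 'a) \<Rightarrow> ('g \<Rightarrow> 'a) set" where
  "orbit f = {shift g f | g. True}"

definition power_top :: "'a topology \<Rightarrow> ('g \<Rightarrow> 'a) topology" where
  "power_top X = product_topology (\<lambda>_. X) UNIV"

definition orbit_space :: "'a topology \<Rightarrow> ('g::ab_group_add \<Rightarrow> 'a) \<Rightarrow> ('g \<Rightarrow> 'a) topology" where
  "orbit_space X f = subtopology (power_top X) (orbit f)"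

definition korovin_mapping :: "'a topology \<Rightarrow> ('g::ab_group_add \<Rightarrow> 'a) \<Rightarrow> bool" where
  "korovin_mapping X f \<longleftrightarrow> f ` UNIV \<subseteq> topspace X \<and>
     (\<forall>M. countable M \<longrightarrow> (\<lambda>h. restrict h M) ` orbit f = PiE M (\<lambda>_. topspace X))"

end

theory Submission
  imports Defs
begin

text \<open>A Korovin mapping realises every finite pattern of values of X along some translate
  of G; in particular its orbit is dense in X^G and distinct group elements give distinct
  points of the orbit.  If X has disjoint nonempty open sets U and V, two orbit points
  shift g f and shift g' f are separated in a single coordinate k chosen with
  f (g + k) \<in> U and f (g' + k) \<in> V.  If instead any two nonempty open sets of X meet,
  then any two nonempty open sets of X^G meet (choose a common point coordinatewise in two
  basic boxes), so by density any two nonempty open sets of the orbit meet, and two distinct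
  orbit points cannot be separated.\<close>

lemma korovin_mapping_in_topspace: "korovin_mapping X f \<Longrightarrow> f i \<in> topspace X"
  unfolding korovin_mapping_def by blast

lemma korovin_mapping_obtain_shift:
  assumes "korovin_mapping X f" "countable M" "t \<in> PiE M (\<lambda>_. topspace X)"
  obtains k where "\<And>i. i \<in> M \<Longrightarrow> f (i + k) = t i"
proof -
  have "t \<in> (\<lambda>h. restrict h M) ` orbit f"
    using assms unfolding korovin_mapping_def by blast
  then obtain k where "t = restrict (shift k f) M"
    unfolding orbit_def by blast
  then show ?thesis
    using that by (auto simp: shift_def)
qed

lemma korovin_mapping_obtain_shift_pair:
  assumes "korovin_mapping X f" "g \<noteq> g'" "a \<in> topspace X" "b \<in> topspace X"
  obtains k where "f (g + k) = a" "f (g' + k) = b"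
proof -
  let ?t = "\<lambda>i. if i = g then a else if i = g' then b else undefined"
  have t: "?t \<in> PiE {g, g'} (\<lambda>_. topspace X)"
    using assms by auto
  have M: "countable {g, g'}"
    by simp
  obtain k where k: "\<And>i. i \<in> {g, g'} \<Longrightarrow> f (i + k) = ?t i"
    using korovin_mapping_obtain_shift[OF assms(1) M t] by blast
  have "f (g + k) = a" "f (g' + k) = b"
    using k[of g] k[of g'] assms(2) by simp_all
  then show ?thesis
    using that by blast
qed

lemma topspace_power_top: "topspace (power_top X) = {h. \<forall>i. h i \<in> topspace X}"
  by (auto simp: power_top_def PiE_def extensional_def)

lemma topspace_orbit_space:
  assumes "korovin_mapping X f"
  shows "topspace (orbit_space X f) = orbit f"
proof -
  have "orbit f \<subseteq> topspace (power_top X)"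
    using korovin_mapping_in_topspace[OF assms]
    by (auto simp: topspace_power_top orbit_def shift_def)
  then show ?thesis
    by (auto simp: orbit_space_def)
qed

lemma korovin_mapping_inj_shift:
  assumes "korovin_mapping X f" "a \<in> topspace X" "b \<in> topspace X" "a \<noteq> b"
  shows "inj (\<lambda>g. shift g f)"
proof (rule injI, rule ccontr)
  fix g g' assume eq: "shift g f = shift g' f" and "g \<noteq> g'"
  obtain k where "f (g + k) = a" "f (g' + k) = b"
    using korovin_mapping_obtain_shift_pair[OF assms(1) \<open>g \<noteq> g'\<close> assms(2,3)] .
  moreover have "f (k + g) = f (k + g')"
    using fun_cong[OF eq, of k] by (simp add: shift_def)
  ultimately show False
    using assms(4) by (simp add: add.commute)
qed

lemma openin_power_top_obtain_box:
  assumes "openin (power_top X) W" "h \<in> W"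
  obtains U where "finite {i. U i \<noteq> topspace X}" "\<And>i. openin X (U i)"
    "h \<in> PiE UNIV U" "PiE UNIV U \<subseteq> W"
  using assms unfolding power_top_def openin_product_topology_alt by auto

lemma korovin_orbit_dense:
  assumes kor: "korovin_mapping X f" and W: "openin (power_top X) W" "W \<noteq> {}"
  shows "W \<inter> orbit f \<noteq> {}"
proof -
  obtain h where "h \<in> W" using W(2) by blast
  then obtain U where U: "finite {i. U i \<noteq> topspace X}" "\<And>i. openin X (U i)"
      "h \<in> PiE UNIV U" "PiE UNIV U \<subseteq> W"
    using openin_power_top_obtain_box[OF W(1)] by blast
  define F where "F = {i. U i \<noteq> topspace X}"
  have "restrict h F \<in> PiE F (\<lambda>_. topspace X)"
    using U(2,3) openin_subset by fastforce
  moreover have "countable F"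
    using U(1) by (simp add: F_def countable_finite)
  ultimately obtain c where "\<And>i. i \<in> F \<Longrightarrow> f (i + c) = restrict h F i"
    using korovin_mapping_obtain_shift[OF kor] by blast
  then have c: "\<And>i. i \<in> F \<Longrightarrow> f (i + c) = h i"
    by simp
  have "shift c f i \<in> U i" for i
    using c U(3) korovin_mapping_in_topspace[OF kor]
    by (cases "i \<in> F") (auto simp: shift_def F_def)
  then have "shift c f \<in> W"
    using U(4) by auto
  moreover have "shift c f \<in> orbit f"
    by (auto simp: orbit_def)
  ultimately show ?thesis by blast
qed

lemma power_top_opens_intersect:
  assumes X: "\<And>U V. \<lbrakk>openin X U; openin X V; U \<noteq> {}; V \<noteq> {}\<rbrakk> \<Longrightarrow> U \<inter> V \<noteq> {}"
    and W1: "openin (power_top X) W1" "W1 \<noteq> {}"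
    and W2: "openin (power_top X) W2" "W2 \<noteq> {}"
  shows "W1 \<inter> W2 \<noteq> {}"
proof -
  obtain x y where "x \<in> W1" "y \<in> W2"
    using W1(2) W2(2) by blast
  then obtain U V where U: "\<And>i. openin X (U i)" "x \<in> PiE UNIV U" "PiE UNIV U \<subseteq> W1"
    and V: "\<And>i. openin X (V i)" "y \<in> PiE UNIV V" "PiE UNIV V \<subseteq> W2"
    using openin_power_top_obtain_box W1(1) W2(1) by metis
  have "U i \<inter> V i \<noteq> {}" for i
    using X[OF U(1) V(1)] U(2) V(2) by blast
  then have "PiE UNIV (\<lambda>i. U i \<inter> V i) \<noteq> {}"
    by (simp add: PiE_eq_empty_iff)
  moreover have "PiE UNIV (\<lambda>i. U i \<inter> V i) \<subseteq> W1 \<inter> W2"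
    using U(3) V(3) by (auto simp: PiE_iff)
  ultimately show ?thesis by blast
qed

lemma Hausdorff_orbit_space_imp_disjoint_opens:
  assumes kor: "korovin_mapping X f" and H: "Hausdorff_space (orbit_space X f)"
    and xy: "x \<in> orbit f" "y \<in> orbit f" "x \<noteq> y"
  shows "\<exists>U V. openin X U \<and> openin X V \<and> U \<noteq> {} \<and> V \<noteq> {} \<and> U \<inter> V = {}"
proof (rule ccontr)
  assume "\<not> ?thesis"
  then have X: "\<And>U V. \<lbrakk>openin X U; openin X V; U \<noteq> {}; V \<noteq> {}\<rbrakk> \<Longrightarrow> U \<inter> V \<noteq> {}"
    by blast
  obtain O1 O2 where O: "openin (orbit_space X f) O1" "openin (orbit_space X f) O2"
      "x \<in> O1" "y \<in> O2" "disjnt O1 O2"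
    using H xy topspace_orbit_space[OF kor] unfolding Hausdorff_space_def by metis
  then obtain W1 W2 where W: "openin (power_top X) W1" "O1 = W1 \<inter> orbit f"
      "openin (power_top X) W2" "O2 = W2 \<inter> orbit f"
    unfolding orbit_space_def openin_subtopology by metis
  have "W1 \<inter> W2 \<noteq> {}"
    using power_top_opens_intersect[OF X W(1) _ W(3)] O(3,4) W(2,4) by blast
  then have "W1 \<inter> W2 \<inter> orbit f \<noteq> {}"
    using korovin_orbit_dense[OF kor] W(1,3) by (metis openin_Int)
  then show False
    using O(5) W(2,4) by (auto simp: disjnt_def)
qed

lemma openin_orbit_space_coordinate:
  assumes "korovin_mapping X f" "openin X U"
  shows "openin (orbit_space X f) {h \<in> orbit f. h k \<in> U}"
proof -
  have "continuous_map (orbit_space X f) X (\<lambda>h. h k)"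
    unfolding orbit_space_def power_top_def
    by (intro continuous_map_from_subtopology continuous_map_product_projection) simp
  then have "openin (orbit_space X f) {h \<in> topspace (orbit_space X f). h k \<in> U}"
    using assms(2) by (rule openin_continuous_map_preimage)
  then show ?thesis
    by (simp add: topspace_orbit_space[OF assms(1)])
qed

lemma disjoint_opens_imp_Hausdorff_orbit_space:
  assumes kor: "korovin_mapping X f"
    and UV: "openin X U" "openin X V" "U \<noteq> {}" "V \<noteq> {}" "U \<inter> V = {}"
  shows "Hausdorff_space (orbit_space X f)"
  unfolding Hausdorff_space_def topspace_orbit_space[OF kor]
proof (intro allI impI, elim conjE)
  fix x y assume "x \<in> orbit f" "y \<in> orbit f" "x \<noteq> y"
  then obtain g g' where gg: "x = shift g f" "y = shift g' f" "g \<noteq> g'"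
    unfolding orbit_def by blast
  obtain u v where "u \<in> U" "v \<in> V"
    using UV by blast
  then have "u \<in> topspace X" "v \<in> topspace X"
    using UV openin_subset by blast+
  then obtain k where "f (g + k) = u" "f (g' + k) = v"
    using korovin_mapping_obtain_shift_pair[OF kor gg(3)] by blast
  then have "x k \<in> U" "y k \<in> V"
    using \<open>u \<in> U\<close> \<open>v \<in> V\<close> gg by (simp_all add: shift_def add.commute)
  then show "\<exists>O1 O2. openin (orbit_space X f) O1 \<and> openin (orbit_space X f) O2 \<and>
      x \<in> O1 \<and> y \<in> O2 \<and> disjnt O1 O2"
    using openin_orbit_space_coordinate[OF kor] UV \<open>x \<in> orbit f\<close> \<open>y \<in> orbit f\<close>
    by (intro exI[of _ "{h \<in> orbit f. h k \<in> U}"] exI[of _ "{h \<in> orbit f. h k \<in> V}"])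
      (auto simp: disjnt_def)
qed

theorem proposition4p2:
  fixes X :: "'a topology" and f :: "'g::ab_group_add \<Rightarrow> 'a"
  assumes "\<exists>a\<in>topspace X. \<exists>b\<in>topspace X. a \<noteq> b"
    and "infinite (UNIV :: 'g set)"
    and "korovin_mapping X f"
  shows "(Hausdorff_space (orbit_space X f) \<longleftrightarrow>
           (\<exists>U V. openin X U \<and> openin X V \<and> U \<noteq> {} \<and> V \<noteq> {} \<and> U \<inter> V = {}))
       \<and> ((\<forall>f'::'g \<Rightarrow> 'a. korovin_mapping X f' \<longrightarrow> Hausdorff_space (orbit_space X f')) \<longleftrightarrow>
          (\<exists>f'::'g \<Rightarrow> 'a. korovin_mapping X f' \<and> Hausdorff_space (orbit_space X f')))"
proof -
  obtain a b where ab: "a \<in> topspace X" "b \<in> topspace X" "a \<noteq> b"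
    using assms(1) by blast
  have "UNIV \<noteq> {0 :: 'g}"
    using assms(2) by (metis finite.intros)
  then obtain h :: 'g where "h \<noteq> 0"
    by blast
  have "Hausdorff_space (orbit_space X f') \<longleftrightarrow>
      (\<exists>U V. openin X U \<and> openin X V \<and> U \<noteq> {} \<and> V \<noteq> {} \<and> U \<inter> V = {})"
    if kor: "korovin_mapping X f'" for f' :: "'g \<Rightarrow> 'a"
  proof
    have "shift 0 f' \<noteq> shift h f'"
      using korovin_mapping_inj_shift[OF kor ab] \<open>h \<noteq> 0\<close> by (metis injD)
    moreover have "shift 0 f' \<in> orbit f'" "shift h f' \<in> orbit f'"
      by (auto simp: orbit_def)
    ultimately show "Hausdorff_space (orbit_space X f') \<Longrightarrow> \<exists>U V. openin X U \<and> openin X V \<and>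
        U \<noteq> {} \<and> V \<noteq> {} \<and> U \<inter> V = {}"
      using Hausdorff_orbit_space_imp_disjoint_opens[OF kor] by blast
  qed (use disjoint_opens_imp_Hausdorff_orbit_space[OF kor] in blast)
  then show ?thesis
    using assms(3) by blast
qed

end
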